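(* Let $X=(x_1,\ldots,x_n)$, $\widetilde{X}=(-x_1,x_2,\ldots,x_n)$ and $X'=(x_2,\ldots,x_n)$. For any partition $\lambda\in\mathcal{E}_n$ of length $\ell\geqslant1$, $$\sum_{i=1}^{\ell}(-1)^{i-1}\,\widetilde{P}_{\lambda\smallsetminus\{\lambda_i\}}(X)\,e_{\lambda_i}(X')=\widetilde{P}_\lambda(\widetilde{X})+(-1)^{\ell+1}\widetilde{P}_\lambda(X).$$
   Context: $\mathcal{E}_n$ is the set of all (not necessarily strict) partitions with all parts $\leqslant n$. $e_k$ denotes the $k$-th elementary symmetric polynomial. For a list of variables $Y$: $\widetilde{P}_0(Y)=1$, $\widetilde{P}_i(Y)=e_i(Y)/2$ for $i>0$; for $i\geqslant j\geqslant0$, $\widetilde{P}_{i,j}(Y)=\widetilde{P}_i\widetilde{P}_j+2\sum_{k=1}^{j-1}(-1)^k\widetilde{P}_{i+k}\widetilde{P}_{j-k}+(-1)^j\widetilde{P}_{i+j}$; for a partition $\mu$ of length $m$, $\widetilde{P}_\mu(Y)=\mathrm{Pfaffian}[\widetilde{P}_{\mu_i,\mu_j}(Y)]_{1\leqslant i<j\leqslant 2\lfloor(m+1)/2\rfloor}$ (with $\mu_{m+1}=0$; $\widetilde P$ of the empty partition is $1$). $\lambda\smallsetminus\{\lambda_i\}$ denotes the partition obtained from $\lambda$ by removing its $i$-th part. *)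

theory Defs
  imports Complex_Main
begin

definition esym :: "nat \<Rightarrow> 'a::comm_ring_1 list \<Rightarrow> 'a" where
  "esym k xs = (\<Sum>S\<in>{S. S \<subseteq> {..<length xs} \<and> card S = k}. \<Prod>i\<in>S. xs ! i)"

definition Pt1 :: "nat \<Rightarrow> 'a::field_char_0 list \<Rightarrow> 'a" where
  "Pt1 i ys = (if i = 0 then 1 else esym i ys / 2)"

definition Pt2 :: "nat \<Rightarrow> nat \<Rightarrow> 'a::field_char_0 list \<Rightarrow> 'a" where
  "Pt2 i j ys = (if j = 0 then Pt1 i ys else
     Pt1 i ys * Pt1 j ys
     + 2 * (\<Sum>k\<in>{1..<j}. (-1) ^ k * Pt1 (i + k) ys * Pt1 (j - k) ys)
     + (-1) ^ j * Pt1 (i + j) ys)"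

function pfaff :: "(nat \<Rightarrow> nat \<Rightarrow> 'a::comm_ring_1) \<Rightarrow> nat list \<Rightarrow> 'a" where
  "pfaff a [] = 1"
| "pfaff a (i # is) =
     (\<Sum>k<length is. (-1) ^ k * a i (is ! k) * pfaff a (take k is @ drop (Suc k) is))"
  by pat_completeness auto
termination
  by (relation "measure (\<lambda>(a, xs). length xs)") auto

definition Ptl :: "nat list \<Rightarrow> 'a::field_char_0 list \<Rightarrow> 'a" where
  "Ptl mu ys =
     (let mu' = (if odd (length mu) then mu @ [0] else mu)
      in pfaff (\<lambda>i j. Pt2 (mu' ! i) (mu' ! j) ys) [0..<length mu'])"

definition in_E :: "nat \<Rightarrow> nat list \<Rightarrow> bool" where
  "in_E n lam \<longleftrightarrow> sorted_wrt (\<ge>) lam \<and> (\<forall>p\<in>set lam. 0 < p \<and> p \<le> n)"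

text \<open>lam minus its i-th part (1-indexed).\<close>
definition remove_part :: "nat list \<Rightarrow> nat \<Rightarrow> nat list" where
  "remove_part lam i = take (i - 1) lam @ drop i lam"

end

theory Submission
  imports Defs
begin

(* Write X = x # X' and X~ = (-x) # X'. Since e_k(X) = e_k(X') + x e_(k-1)(X'), the matrix
   A~ = [P~_(lam_i,lam_j)(X~)] is the rank-two update A + u v^T - v u^T of
   A = [P~_(lam_i,lam_j)(X)], where u_i = P~_(lam_i)(X~) and v_i = P~_(lam_i)(X); moreover the
   padding index (part 0) has column u in A~ and v in A, and e_(lam_i)(X') = u_i + v_i.
   The identity is therefore the expansion of the Pfaffian of a rank-two update along the
   minors of A. For odd length it follows by adding v_i times the padding row to row i;
   the even case reduces to the odd one after bordering both matrices by a further index. *)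

fun index_of :: "'b list \<Rightarrow> 'b \<Rightarrow> nat" where
  "index_of [] x = 0"
| "index_of (y # ys) x = (if y = x then 0 else Suc (index_of ys x))"

lemma index_of_nth: "distinct xs \<Longrightarrow> k < length xs \<Longrightarrow> index_of xs (xs ! k) = k"
  by (induction xs arbitrary: k) (auto simp: nth_Cons split: nat.split)

lemma index_of_inj:
  "x \<in> set ys \<Longrightarrow> y \<in> set ys \<Longrightarrow> index_of ys x = index_of ys y \<Longrightarrow> x = y"
  by (induction ys) (auto split: if_splits)

lemma index_of_remove1:
  "distinct ys \<Longrightarrow> x \<in> set ys \<Longrightarrow> y \<in> set ys \<Longrightarrow> x \<noteq> y \<Longrightarrow>
   index_of (remove1 x ys) y
     = (if index_of ys x < index_of ys y then index_of ys y - 1 else index_of ys y)"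
  by (induction ys) auto

lemma index_of_append:
  "index_of (xs @ ys) x = (if x \<in> set xs then index_of xs x else length xs + index_of ys x)"
  by (induction xs) auto

lemma take_drop_Suc_eq_remove1_nth:
  "distinct xs \<Longrightarrow> k < length xs \<Longrightarrow> take k xs @ drop (Suc k) xs = remove1 (xs ! k) xs"
proof (induction xs arbitrary: k)
  case (Cons y ys)
  then show ?case
    by (cases k) (auto simp: nth_mem)
qed simp

lemma set_take_drop_Suc_subset: "set (take k xs @ drop (Suc k) xs) \<subseteq> set xs"
  using set_take_subset[of k xs] set_drop_subset[of "Suc k" xs] by auto

lemma sum_swap_off_diagonal:
  fixes f :: "'b \<Rightarrow> 'b \<Rightarrow> 'c::comm_monoid_add"
  assumes "finite S"
  shows "(\<Sum>x\<in>S. \<Sum>y\<in>S - {x}. f x y) = (\<Sum>y\<in>S. \<Sum>x\<in>S - {y}. f x y)"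
proof -
  have "S - {x} = {y\<in>S. x \<noteq> y}" "S - {y} = {x\<in>S. x \<noteq> y}" for x y
    by auto
  then show ?thesis
    using sum.swap_restrict[OF assms assms, of f "\<lambda>x y. x \<noteq> y"] by simp
qed

section \<open>Pfaffians of skew-symmetric matrices\<close>

definition skew :: "(nat \<Rightarrow> nat \<Rightarrow> 'a::comm_ring_1) \<Rightarrow> bool" where
  "skew a \<longleftrightarrow> (\<forall>i j. a j i = - a i j)"

lemma skewD: "skew a \<Longrightarrow> a j i = - a i j"
  unfolding skew_def by blast

lemma skew_diag_zero: "skew (a :: nat \<Rightarrow> nat \<Rightarrow> 'a::field_char_0) \<Longrightarrow> a i i = 0"
  using skewD[of a i i] by simp

declare pfaff.simps(2)[simp del]

lemma pfaff_Cons_sum_set: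
  assumes "distinct is"
  shows "pfaff a (i # is) = (\<Sum>x\<in>set is. (-1) ^ index_of is x * a i x * pfaff a (remove1 x is))"
proof -
  have "pfaff a (i # is)
      = (\<Sum>k<length is. (-1) ^ index_of is (is ! k) * a i (is ! k) * pfaff a (remove1 (is ! k) is))"
    unfolding pfaff.simps using assms
    by (intro sum.cong) (simp_all add: index_of_nth take_drop_Suc_eq_remove1_nth)
  also have "\<dots> = (\<Sum>x\<in>set is. (-1) ^ index_of is x * a i x * pfaff a (remove1 x is))"
    using sum.reindex_bij_betw[OF bij_betw_nth[OF assms refl refl]] by simp
  finally show ?thesis .
qed

lemma pfaff_cong:
  "(\<And>x y. x \<in> set L \<Longrightarrow> y \<in> set L \<Longrightarrow> a x y = b x y) \<Longrightarrow> pfaff a L = pfaff b L"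
proof (induction a L rule: pfaff.induct)
  case (2 a i "is")
  have "pfaff a (take k is @ drop (Suc k) is) = pfaff b (take k is @ drop (Suc k) is)"
    if "k < length is" for k
  proof (rule "2.IH")
    fix x y assume "x \<in> set (take k is @ drop (Suc k) is)" "y \<in> set (take k is @ drop (Suc k) is)"
    then show "a x y = b x y"
      using "2.prems" set_take_drop_Suc_subset[of k "is"] by auto
  qed (use that in simp)
  then show ?case
    using "2.prems" unfolding pfaff.simps by (intro sum.cong) auto
qed simp

lemma pfaff_map: "pfaff a (map h L) = pfaff (\<lambda>i j. a (h i) (h j)) L"
proof (induction "length L" arbitrary: L rule: less_induct)
  case less
  show ?case
  proof (cases L)
    case (Cons i "is")
    have "pfaff a (map h (take k is @ drop (Suc k) is))
        = pfaff (\<lambda>i j. a (h i) (h j)) (take k is @ drop (Suc k) is)" if "k < length is" for k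
      using Cons that by (intro less) auto
    then show ?thesis
      unfolding Cons list.map pfaff.simps by (auto simp: take_map drop_map intro: sum.cong)
  qed simp
qed

definition pfaff_cross_term ::
  "(nat \<Rightarrow> nat \<Rightarrow> 'a::comm_ring_1) \<Rightarrow> nat list \<Rightarrow> nat \<Rightarrow> nat \<Rightarrow> 'a" where
  "pfaff_cross_term a ys i j = (\<Sum>x\<in>set ys. \<Sum>y\<in>set ys - {x}.
      (-1) ^ (index_of ys x + index_of (remove1 x ys) y) * a i x * a j y
      * pfaff a (remove1 y (remove1 x ys)))"

lemma pfaff_Cons_Cons:
  assumes "distinct (i # j # ys)"
  shows "pfaff a (i # j # ys) = a i j * pfaff a ys - pfaff_cross_term a ys i j"
proof -
  have dj: "distinct (j # ys)" and dys: "distinct ys" and jn: "j \<notin> set ys"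
    using assms by auto
  have expand_j: "(-1) ^ index_of ys x * a i x * pfaff a (j # remove1 x ys)
      = (\<Sum>y\<in>set ys - {x}. (-1) ^ (index_of ys x + index_of (remove1 x ys) y) * a i x * a j y
          * pfaff a (remove1 y (remove1 x ys)))" for x
    using pfaff_Cons_sum_set[of "remove1 x ys" a j] dys
    by (simp add: sum_distrib_left power_add mult.assoc mult.left_commute)
  have "pfaff a (i # j # ys)
      = (\<Sum>x\<in>insert j (set ys). (-1) ^ index_of (j # ys) x * a i x * pfaff a (remove1 x (j # ys)))"
    using pfaff_Cons_sum_set[OF dj] by simp
  also have "\<dots> = a i j * pfaff a ys
      - (\<Sum>x\<in>set ys. (-1) ^ index_of ys x * a i x * pfaff a (j # remove1 x ys))"
    using jn by (auto simp: sum.insert sum_negf[symmetric] intro!: sum.cong)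
  finally show ?thesis
    unfolding expand_j pfaff_cross_term_def .
qed

lemma minus_one_power_index_swap:
  fixes p q :: nat
  assumes "p \<noteq> q"
  shows "(-1::'a::comm_ring_1) ^ (q + (if q < p then p - 1 else p))
       = - ((-1) ^ (p + (if p < q then q - 1 else q)))"
proof (cases "p < q")
  case True
  then obtain q' where "q = Suc q'" by (cases q) auto
  then show ?thesis using True by (simp add: algebra_simps)
next
  case False
  then obtain p' where "p = Suc p'" using assms by (cases p) auto
  then show ?thesis using False assms by (simp add: algebra_simps)
qed

lemma pfaff_cross_term_swap:
  assumes "distinct ys"
  shows "pfaff_cross_term a ys j i = - pfaff_cross_term a ys i j"
proof -
  let ?S = "set ys"
  have "pfaff_cross_term a ys j i = (\<Sum>y\<in>?S. \<Sum>x\<in>?S - {y}.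
      (-1) ^ (index_of ys x + index_of (remove1 x ys) y) * a j x * a i y
      * pfaff a (remove1 y (remove1 x ys)))"
    unfolding pfaff_cross_term_def by (rule sum_swap_off_diagonal) simp
  also have "\<dots> = (\<Sum>y\<in>?S. \<Sum>x\<in>?S - {y}.
      - ((-1) ^ (index_of ys y + index_of (remove1 y ys) x) * a i y * a j x
        * pfaff a (remove1 x (remove1 y ys))))"
  proof (intro sum.cong refl)
    fix y x assume y: "y \<in> ?S" and x: "x \<in> ?S - {y}"
    have "index_of ys x \<noteq> index_of ys y"
      using index_of_inj[of x ys y] x y by auto
    then have "(-1::'a) ^ (index_of ys x + index_of (remove1 x ys) y)
        = - ((-1) ^ (index_of ys y + index_of (remove1 y ys) x))"
      using index_of_remove1[OF assms, of x y] index_of_remove1[OF assms, of y x] x y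
        minus_one_power_index_swap[of "index_of ys y" "index_of ys x", where 'a='a]
      by auto
    then show "(-1) ^ (index_of ys x + index_of (remove1 x ys) y) * a j x * a i y
          * pfaff a (remove1 y (remove1 x ys))
        = - ((-1) ^ (index_of ys y + index_of (remove1 y ys) x) * a i y * a j x
          * pfaff a (remove1 x (remove1 y ys)))"
      by (simp add: remove1_commute[of x y] algebra_simps)
  qed
  also have "\<dots> = - pfaff_cross_term a ys i j"
    unfolding pfaff_cross_term_def by (simp add: sum_negf)
  finally show ?thesis .
qed

lemma pfaff_swap_Cons:
  assumes "distinct (i # j # ys)" "skew a"
  shows "pfaff a (i # j # ys) = - pfaff a (j # i # ys)"
proof -
  have "distinct (j # i # ys)" using assms by auto
  have "a j i = - a i j" using assms(2) by (rule skewD)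
  moreover have "distinct ys" using assms(1) by simp
  ultimately show ?thesis
    unfolding pfaff_Cons_Cons[OF assms(1)] pfaff_Cons_Cons[OF \<open>distinct (j # i # ys)\<close>]
      pfaff_cross_term_swap[OF \<open>distinct ys\<close>, of a i j]
    by (simp add: algebra_simps)
qed

lemma pfaff_swap_adjacent:
  assumes "distinct (xs @ i # j # ys)" "skew a"
  shows "pfaff a (xs @ i # j # ys) = - pfaff a (xs @ j # i # ys)"
  using assms(1)
proof (induction "length xs" arbitrary: xs ys rule: less_induct)
  case less
  show ?case
  proof (cases xs)
    case Nil
    then show ?thesis using pfaff_swap_Cons less.prems assms(2) by simp
  next
    case (Cons w xs')
    define L0 where "L0 = xs' @ i # j # ys"
    define L1 where "L1 = xs' @ j # i # ys"
    have d: "distinct L0" "distinct L1" and "set L1 = set L0"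
      using less.prems Cons by (auto simp: L0_def L1_def)
    have term_swap: "(-1) ^ index_of L0 z * a w z * pfaff a (remove1 z L0)
        = - ((-1) ^ index_of L1 z * a w z * pfaff a (remove1 z L1))" if z: "z \<in> set L0" for z
    proof -
      consider "z \<in> {i, j}" | "z \<in> set xs'" | "z \<in> set ys" "z \<notin> set xs'" "z \<notin> {i, j}"
        using z by (auto simp: L0_def)
      then show ?thesis
      proof cases
        case 1
        then show ?thesis
          using less.prems Cons by (auto simp: L0_def L1_def remove1_append index_of_append)
      next
        case 2
        have "pfaff a (remove1 z xs' @ i # j # ys) = - pfaff a (remove1 z xs' @ j # i # ys)"
          using less.prems Cons 2 by (intro less.hyps) (auto simp: length_remove1)
        then show ?thesis
          using 2 by (simp add: L0_def L1_def remove1_append index_of_append)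
      next
        case 3
        have "pfaff a (xs' @ i # j # remove1 z ys) = - pfaff a (xs' @ j # i # remove1 z ys)"
          using less.prems Cons 3 by (intro less.hyps) auto
        then show ?thesis
          using 3 by (simp add: L0_def L1_def remove1_append index_of_append)
      qed
    qed
    have "pfaff a (xs @ i # j # ys)
        = (\<Sum>z\<in>set L0. (-1) ^ index_of L0 z * a w z * pfaff a (remove1 z L0))"
      using pfaff_Cons_sum_set[OF d(1), of a w] Cons by (simp add: L0_def)
    also have "\<dots> = - (\<Sum>z\<in>set L1. (-1) ^ index_of L1 z * a w z * pfaff a (remove1 z L1))"
      unfolding \<open>set L1 = set L0\<close> sum_negf[symmetric] using term_swap by (rule sum.cong[OF refl])
    also have "\<dots> = - pfaff a (xs @ j # i # ys)"
      using pfaff_Cons_sum_set[OF d(2), of a w] Cons by (simp add: L1_def)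
    finally show ?thesis .
  qed
qed

lemma pfaff_move_to_front:
  assumes "distinct (pre @ ps @ z # qs)" "skew a"
  shows "pfaff a (pre @ ps @ z # qs) = (-1) ^ length ps * pfaff a (pre @ z # ps @ qs)"
  using assms(1)
proof (induction ps arbitrary: qs rule: rev_induct)
  case (snoc p ps)
  have "pfaff a (pre @ (ps @ [p]) @ z # qs) = - pfaff a ((pre @ ps) @ z # p # qs)"
    using pfaff_swap_adjacent[OF _ assms(2), of "pre @ ps" p z qs] snoc.prems by simp
  also have "pfaff a ((pre @ ps) @ z # p # qs) = (-1) ^ length ps * pfaff a (pre @ z # ps @ p # qs)"
    using snoc.IH[of "p # qs"] snoc.prems by auto
  finally show ?case by simp
qed simp

lemma pfaff_eq_0_if_rows_eq:
  fixes b :: "nat \<Rightarrow> nat \<Rightarrow> 'a::field_char_0"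
  assumes "distinct L" "skew b" "x \<in> set L" "z \<in> set L" "x \<noteq> z"
    and rows_eq: "\<And>j. j \<in> set L \<Longrightarrow> b x j = b z j"
  shows "pfaff b L = 0"
proof -
  obtain ps qs where L: "L = ps @ x # qs" using split_list[OF assms(3)] by blast
  then have "z \<in> set (ps @ qs)" using assms(4,5) by auto
  then obtain ps' qs' where R: "ps @ qs = ps' @ z # qs'" using split_list by metis
  define R where "R = ps' @ qs'"
  have "distinct (x # ps @ qs)" using assms(1) L by auto
  then have d: "distinct (x # ps' @ z # qs')" by (simp only: R)
  have "pfaff b L = (-1) ^ length ps * pfaff b (x # ps' @ z # qs')"
    using pfaff_move_to_front[of "[]" ps x qs b] assms(1,2) L R by simp
  also have "pfaff b (x # ps' @ z # qs') = (-1) ^ length ps' * pfaff b (x # z # R)"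
    using pfaff_move_to_front[of "[x]" ps' z qs' b] d assms(2) by (simp add: R_def)
  finally have move: "pfaff b L = (-1) ^ length ps * ((-1) ^ length ps' * pfaff b (x # z # R))" .
  have dR: "distinct (x # z # R)"
    using d by (auto simp: R_def)
  have "set (x # z # R) = insert x (set (ps' @ z # qs'))"
    by (auto simp: R_def)
  then have setR: "set (x # z # R) = set L"
    unfolding R[symmetric] L by auto
  define h where "h = id (x := z, z := x)"
  have h_invariant: "b (h i) (h j) = b i j" if "i \<in> set L" "j \<in> set L" for i j
  proof -
    have "b i x = b i z" if "i \<in> set L" for i
      using rows_eq[OF that] skewD[OF assms(2)] by metis
    moreover have "b x z = 0" "b z x = 0"
      using rows_eq[OF assms(4)] skew_diag_zero[OF assms(2)] skewD[OF assms(2), of x z] by auto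
    ultimately show ?thesis
      using that rows_eq skew_diag_zero[OF assms(2)] by (auto simp: h_def)
  qed
  have "pfaff b (z # x # R) = pfaff b (map h (x # z # R))"
    using dR by (auto simp: h_def intro!: map_idI[symmetric])
  also have "\<dots> = pfaff b (x # z # R)"
    unfolding pfaff_map using h_invariant setR by (intro pfaff_cong) auto
  finally have "pfaff b (x # z # R) = 0"
    using pfaff_swap_Cons[OF dR assms(2)] by simp
  then show ?thesis
    using move by simp
qed

definition with_column ::
  "(nat \<Rightarrow> nat \<Rightarrow> 'a::comm_ring_1) \<Rightarrow> nat \<Rightarrow> (nat \<Rightarrow> 'a) \<Rightarrow> nat \<Rightarrow> nat \<Rightarrow> 'a"
  where "with_column a z w i j =
    (if i = z \<and> j = z then 0 else if j = z then w i else if i = z then - w j else a i j)"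

lemma with_column_simps [simp]:
  "with_column a z w z z = 0"
  "i \<noteq> z \<Longrightarrow> with_column a z w i z = w i"
  "j \<noteq> z \<Longrightarrow> with_column a z w z j = - w j"
  "i \<noteq> z \<Longrightarrow> j \<noteq> z \<Longrightarrow> with_column a z w i j = a i j"
  by (auto simp: with_column_def)

lemma skew_with_column:
  assumes "skew a"
  shows "skew (with_column a z w)"
  unfolding skew_def
proof (intro allI)
  fix i j
  show "with_column a z w j i = - with_column a z w i j"
    using skewD[OF assms, of i j] by (simp add: with_column_def)
qed

lemma pfaff_Cons_linear:
  assumes "distinct (x # R)"
    and "\<And>j. j \<in> set R \<Longrightarrow> a x j = b x j + t * c x j"
    and "\<And>i j. i \<in> set R \<Longrightarrow> j \<in> set R \<Longrightarrow> a i j = b i j \<and> c i j = b i j"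
  shows "pfaff a (x # R) = pfaff b (x # R) + t * pfaff c (x # R)"
proof -
  have rest: "pfaff a (remove1 w R) = pfaff b (remove1 w R)" "pfaff c (remove1 w R) = pfaff b (remove1 w R)"
    for w using assms(3) set_remove1_subset[of w R] by (auto intro!: pfaff_cong)
  have "distinct R" using assms(1) by simp
  then show ?thesis
    unfolding pfaff_Cons_sum_set[OF \<open>distinct R\<close>] sum_distrib_left sum.distrib[symmetric]
    using assms(2) by (intro sum.cong) (simp_all add: rest algebra_simps)
qed

lemma pfaff_add_row_multiple:
  fixes a a' :: "nat \<Rightarrow> nat \<Rightarrow> 'a::field_char_0"
  assumes "distinct L" "skew a" "skew a'" "x \<in> set L" "z \<in> set L" "x \<noteq> z"
    and row: "\<And>j. j \<noteq> x \<Longrightarrow> a' x j = a x j + t * a z j"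
    and rest: "\<And>i j. i \<noteq> x \<Longrightarrow> j \<noteq> x \<Longrightarrow> a' i j = a i j"
  shows "pfaff a' L = pfaff a L"
proof -
  obtain ps qs where L: "L = ps @ x # qs" using split_list[OF assms(4)] by blast
  define R where "R = ps @ qs"
  have dR: "distinct (x # R)" using assms(1) L by (auto simp: R_def)
  have move: "pfaff c L = (-1) ^ length ps * pfaff c (x # R)" if "skew c" for c :: "nat \<Rightarrow> nat \<Rightarrow> 'a"
    using pfaff_move_to_front[of "[]" ps x qs c] assms(1) that L by (simp add: R_def)
  define b where "b = with_column a x (\<lambda>i. a i z)"
  have "skew b" unfolding b_def using assms(2) by (rule skew_with_column)
  have az: "- a j z = a z j" for j using skewD[OF assms(2), of z j] by simp
  have "pfaff b (x # R) = 0"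
  proof (rule pfaff_eq_0_if_rows_eq[OF dR \<open>skew b\<close>, of x z])
    show "x \<in> set (x # R)" "z \<in> set (x # R)" "x \<noteq> z" using assms(5,6) L by (auto simp: R_def)
    fix j
    show "b x j = b z j"
      using assms(6) az[of j] skew_diag_zero[OF assms(2), of z] by (cases "j = x") (simp_all add: b_def)
  qed
  moreover have "pfaff a' (x # R) = pfaff a (x # R) + t * pfaff b (x # R)"
  proof (rule pfaff_Cons_linear[OF dR])
    fix i j assume "i \<in> set R" "j \<in> set R"
    then have "i \<noteq> x" "j \<noteq> x" using dR by auto
    then show "a' i j = a i j \<and> b i j = a i j" by (simp add: rest b_def)
  next
    fix j assume "j \<in> set R"
    then have "j \<noteq> x" using dR by auto
    then show "a' x j = a x j + t * b x j" by (simp add: row az b_def)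
  qed
  ultimately show ?thesis
    using move[OF assms(2)] move[OF assms(3)] by simp
qed

definition add_row_multiples ::
  "(nat \<Rightarrow> nat \<Rightarrow> 'a::comm_ring_1) \<Rightarrow> nat \<Rightarrow> (nat \<Rightarrow> 'a) \<Rightarrow> nat set \<Rightarrow> nat \<Rightarrow> nat \<Rightarrow> 'a"
  where "add_row_multiples a z t S = (\<lambda>i j. a i j
    + (if i \<in> S then t i * a z j else 0) - (if j \<in> S then t j * a z i else 0))"

lemma skew_add_row_multiples:
  assumes "skew a"
  shows "skew (add_row_multiples a z t S)"
  unfolding skew_def
proof (intro allI)
  fix i j
  show "add_row_multiples a z t S j i = - add_row_multiples a z t S i j"
    using skewD[OF assms, of i j] by (simp add: add_row_multiples_def algebra_simps)
qed

lemma pfaff_add_row_multiples: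
  fixes a :: "nat \<Rightarrow> nat \<Rightarrow> 'a::field_char_0"
  assumes "distinct L" "skew a" "z \<in> set L" "finite S" "S \<subseteq> set L" "z \<notin> S"
  shows "pfaff (add_row_multiples a z t S) L = pfaff a L"
  using assms(4-6)
proof (induction S rule: finite_induct)
  case empty
  have "add_row_multiples a z t {} = a" by (simp add: add_row_multiples_def)
  then show ?case by simp
next
  case (insert x S)
  have "a z z = 0" using skew_diag_zero[OF assms(2)] .
  then have "pfaff (add_row_multiples a z t (insert x S)) L = pfaff (add_row_multiples a z t S) L"
    using insert assms(3)
    by (intro pfaff_add_row_multiple[OF assms(1) skew_add_row_multiples skew_add_row_multiples, of a a, of x z])
      (auto simp: assms(2) add_row_multiples_def algebra_simps)
  also have "\<dots> = pfaff a L" using insert by simp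
  finally show ?case .
qed

lemma pfaff_snoc:
  assumes "distinct (M @ [z])" "odd (length M)" "skew a"
  shows "pfaff a (M @ [z]) = (\<Sum>x\<in>set M. (-1) ^ index_of M x * a x z * pfaff a (remove1 x M))"
proof -
  have "pfaff a (M @ [z]) = - pfaff a (z # M)"
    using pfaff_move_to_front[of "[]" M z "[]" a] assms by simp
  also have "\<dots> = - (\<Sum>x\<in>set M. (-1) ^ index_of M x * a z x * pfaff a (remove1 x M))"
    using pfaff_Cons_sum_set[of M a z] assms(1) by simp
  also have "\<dots> = (\<Sum>x\<in>set M. (-1) ^ index_of M x * a x z * pfaff a (remove1 x M))"
    unfolding sum_negf[symmetric] using skewD[OF assms(3), of _ z] by (intro sum.cong) auto
  finally show ?thesis .
qed

lemma pfaff_snoc_snoc: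
  assumes "distinct (M @ [z, y])" "even (length M)" "skew a"
  shows "pfaff a (M @ [z, y]) = (\<Sum>x\<in>set M. (-1) ^ index_of M x * a x y * pfaff a (remove1 x M @ [z]))
      + a z y * pfaff a M"
proof -
  have "z \<notin> set M" using assms(1) by simp
  have "pfaff a ((M @ [z]) @ [y])
      = (\<Sum>x\<in>insert z (set M). (-1) ^ index_of (M @ [z]) x * a x y * pfaff a (remove1 x (M @ [z])))"
    using pfaff_snoc[of "M @ [z]" y a] assms by simp
  also have "\<dots> = a z y * pfaff a M
      + (\<Sum>x\<in>set M. (-1) ^ index_of M x * a x y * pfaff a (remove1 x M @ [z]))"
    using \<open>z \<notin> set M\<close> assms(2)
    by (auto simp: index_of_append remove1_append intro!: sum.cong)
  finally show ?thesis by simp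
qed

lemma pfaff_with_column_zero_unit:
  assumes "distinct (M @ [z, y])" "even (length M)" "skew a"
  shows "pfaff (with_column (with_column a z (\<lambda>_. 0)) y w) (M @ [z, y]) = w z * pfaff a M"
proof -
  define b where "b = with_column (with_column a z (\<lambda>_. 0)) y w"
  have "skew b" unfolding b_def using assms(3) by (simp add: skew_with_column)
  have "pfaff b (remove1 x M @ [z]) = 0" if "x \<in> set M" for x
  proof -
    have "distinct (remove1 x M @ [z])" "odd (length (remove1 x M))"
      using assms(1,2) that set_remove1_subset[of x M] by (auto simp: length_remove1)
    moreover have "b i z = 0" if "i \<in> set (remove1 x M)" for i
      using that set_remove1_subset[of x M] assms(1) by (auto simp: b_def with_column_def)
    ultimately show ?thesis
      using pfaff_snoc[OF _ _ \<open>skew b\<close>] by simp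
  qed
  moreover have "pfaff b M = pfaff a M"
    using assms(1) by (intro pfaff_cong) (auto simp: b_def with_column_def)
  ultimately show ?thesis
    using pfaff_snoc_snoc[OF assms(1,2) \<open>skew b\<close>] assms(1) by (simp add: b_def)
qed

section \<open>Pfaffians of rank-two updates\<close>

lemma pfaff_rank_two_update_odd:
  fixes A At :: "nat \<Rightarrow> nat \<Rightarrow> 'a::field_char_0"
  assumes "distinct (M @ [z])" "odd (length M)" "skew A" "skew At"
    and update: "\<And>i j. i \<in> set M \<Longrightarrow> j \<in> set M \<Longrightarrow> At i j = A i j + u i * v j - v i * u j"
    and At_col: "\<And>i. i \<in> set M \<Longrightarrow> At i z = u i"
    and A_col: "\<And>i. i \<in> set M \<Longrightarrow> A i z = v i"
  shows "pfaff At (M @ [z]) + pfaff A (M @ [z])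
    = (\<Sum>x\<in>set M. (-1) ^ index_of M x * (u x + v x) * pfaff A (remove1 x M))"
proof -
  have "z \<notin> set M" using assms(1) by simp
  define B where "B = with_column A z u"
  have "skew B" unfolding B_def using assms(3) by (rule skew_with_column)
  have B_minor: "pfaff B (remove1 x M) = pfaff A (remove1 x M)" for x
    using \<open>z \<notin> set M\<close> set_remove1_subset[of x M] by (intro pfaff_cong) (auto simp: B_def with_column_def)
  \<comment> \<open>Adding \<open>v i\<close> times row \<open>z\<close> of \<open>B\<close> to each row \<open>i \<in> M\<close> produces \<open>At\<close>.\<close>
  have "pfaff At (M @ [z]) = pfaff (add_row_multiples B z v (set M)) (M @ [z])"
  proof (rule pfaff_cong)
    fix i j assume "i \<in> set (M @ [z])" "j \<in> set (M @ [z])"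
    then consider "i \<in> set M" "j \<in> set M" | "i \<in> set M" "j = z" | "i = z" "j \<in> set M" | "i = z" "j = z"
      by auto
    then show "At i j = add_row_multiples B z v (set M) i j"
    proof cases
      case 1
      then show ?thesis using \<open>z \<notin> set M\<close> update[OF 1]
        by (auto simp: B_def with_column_def add_row_multiples_def algebra_simps)
    next
      case 2
      then show ?thesis using \<open>z \<notin> set M\<close> At_col
        by (auto simp: B_def with_column_def add_row_multiples_def)
    next
      case 3
      then show ?thesis using \<open>z \<notin> set M\<close> At_col skewD[OF assms(4), of j z]
        by (auto simp: B_def with_column_def add_row_multiples_def)
    next
      case 4
      then show ?thesis using \<open>z \<notin> set M\<close> skew_diag_zero[OF assms(4)]
        by (simp add: B_def add_row_multiples_def)
    qed
  qed
  also have "\<dots> = pfaff B (M @ [z])"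
    using assms(1) \<open>skew B\<close> \<open>z \<notin> set M\<close> by (intro pfaff_add_row_multiples) auto
  also have "\<dots> = (\<Sum>x\<in>set M. (-1) ^ index_of M x * u x * pfaff A (remove1 x M))"
    unfolding pfaff_snoc[OF assms(1,2) \<open>skew B\<close>] B_minor
    using \<open>z \<notin> set M\<close> by (intro sum.cong) (auto simp: B_def with_column_def)
  moreover have "pfaff A (M @ [z]) = (\<Sum>x\<in>set M. (-1) ^ index_of M x * v x * pfaff A (remove1 x M))"
    unfolding pfaff_snoc[OF assms(1-3)] using A_col by simp
  ultimately show ?thesis
    by (simp add: sum.distrib[symmetric] algebra_simps)
qed

lemma pfaff_rank_two_update_even:
  fixes A At :: "nat \<Rightarrow> nat \<Rightarrow> 'a::field_char_0"
  assumes "distinct (M @ [z])" "even (length M)" "skew A" "skew At"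
    and update: "\<And>i j. i \<in> set M \<Longrightarrow> j \<in> set M \<Longrightarrow> At i j = A i j + u i * v j - v i * u j"
    and A_col: "\<And>i. i \<in> set M \<Longrightarrow> A i z = v i"
  shows "pfaff At M - pfaff A M
    = (\<Sum>x\<in>set M. (-1) ^ index_of M x * (u x + v x) * pfaff A (remove1 x M @ [z]))"
proof -
  have "z \<notin> set M" using assms(1) by simp
  have A_row: "A z j = - v j" if "j \<in> set M" for j
    using A_col[OF that] skewD[OF assms(3), of j z] by (simp add: minus_equation_iff)
  obtain y :: nat where y: "y \<notin> insert z (set M)"
    using ex_new_if_finite[OF infinite_UNIV_nat] by blast
  \<comment> \<open>Border by a new index \<open>y\<close>: then \<open>pfaff At' (M @ [z, y]) = pfaff At M\<close>, \<open>A'\<close> has equal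
     rows \<open>z\<close> and \<open>y\<close>, and the odd case applies to \<open>M @ [z]\<close>.\<close>
  define u' where "u' = u(z := 1)"
  define v' where "v' = v(z := 0)"
  define A' where "A' = with_column A y v'"
  define At' where "At' = with_column (with_column At z (\<lambda>_. 0)) y u'"
  have "skew A'" "skew At'"
    unfolding A'_def At'_def using assms(3,4) by (simp_all add: skew_with_column)
  have A'_minor: "pfaff A' N = pfaff A N" if "set N \<subseteq> insert z (set M)" for N
    using y that by (intro pfaff_cong) (auto simp: A'_def with_column_def)
  have A'_minors: "pfaff A' M = pfaff A M" "pfaff A' (remove1 x M @ [z]) = pfaff A (remove1 x M @ [z])" for x
    using set_remove1_subset[of x M] by (auto intro!: A'_minor)
  have odd_case: "pfaff At' ((M @ [z]) @ [y]) + pfaff A' ((M @ [z]) @ [y])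
    = (\<Sum>x\<in>set (M @ [z]). (-1) ^ index_of (M @ [z]) x * (u' x + v' x) * pfaff A' (remove1 x (M @ [z])))"
  proof (rule pfaff_rank_two_update_odd[OF _ _ \<open>skew A'\<close> \<open>skew At'\<close>])
    show "distinct ((M @ [z]) @ [y])" "odd (length (M @ [z]))" using assms(1,2) y by auto
    fix i j assume "i \<in> set (M @ [z])" "j \<in> set (M @ [z])"
    then show "At' i j = A' i j + u' i * v' j - v' i * u' j"
      using y \<open>z \<notin> set M\<close> update[of i j] A_col[of i] A_row[of j] skew_diag_zero[OF assms(3), of z]
      by (auto simp: A'_def At'_def u'_def v'_def with_column_def)
  qed (use y in \<open>auto simp: A'_def At'_def with_column_def\<close>)
  have "pfaff A' (M @ [z, y]) = 0"
  proof (rule pfaff_eq_0_if_rows_eq[OF _ \<open>skew A'\<close>, of _ z y])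
    fix j assume "j \<in> set (M @ [z, y])"
    then show "A' z j = A' y j"
      using y \<open>z \<notin> set M\<close> A_row[of j] skew_diag_zero[OF assms(3), of z]
      by (auto simp: A'_def v'_def with_column_def)
  qed (use assms(1) y in auto)
  moreover have "pfaff At' (M @ [z, y]) = pfaff At M"
    using pfaff_with_column_zero_unit[OF _ assms(2,4), of z y] assms(1) y by (simp add: At'_def u'_def)
  ultimately show ?thesis
    using odd_case \<open>z \<notin> set M\<close> assms(2)
    by (auto simp: A'_minors u'_def v'_def index_of_append remove1_append intro!: sum.cong)
qed

lemma pfaff_rank_two_update:
  fixes A At :: "nat \<Rightarrow> nat \<Rightarrow> 'a::field_char_0"
  assumes "distinct (M @ [z])" "skew A" "skew At"
    and "\<And>i j. i \<in> set M \<Longrightarrow> j \<in> set M \<Longrightarrow> At i j = A i j + u i * v j - v i * u j"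
    and "\<And>i. i \<in> set M \<Longrightarrow> At i z = u i"
    and "\<And>i. i \<in> set M \<Longrightarrow> A i z = v i"
  defines "pad N \<equiv> if odd (length N) then N @ [z] else N"
  shows "pfaff At (pad M) + (-1) ^ (length M + 1) * pfaff A (pad M)
    = (\<Sum>x\<in>set M. (-1) ^ index_of M x * (u x + v x) * pfaff A (pad (remove1 x M)))"
proof (cases "odd (length M)")
  case True
  have "pad (remove1 x M) = remove1 x M" if "x \<in> set M" for x
    using True that by (simp add: pad_def length_remove1)
  then show ?thesis
    using pfaff_rank_two_update_odd[OF assms(1) True assms(2-6)] True
    by (simp add: pad_def cong: sum.cong)
next
  case False
  have "pad (remove1 x M) = remove1 x M @ [z]" if "x \<in> set M" for x
    using False that by (cases M) (auto simp: pad_def length_remove1)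
  then show ?thesis
    using pfaff_rank_two_update_even[OF assms(1) _ assms(2-4,6)] False
    by (simp add: pad_def cong: sum.cong)
qed

section \<open>Elementary symmetric functions under a sign change of the first variable\<close>

lemma card_subsets_lessThan_Suc:
  "{S. S \<subseteq> {..<Suc n} \<and> card S = Suc k}
    = (\<lambda>T. Suc ` T) ` {T. T \<subseteq> {..<n} \<and> card T = Suc k}
      \<union> (\<lambda>T. insert 0 (Suc ` T)) ` {T. T \<subseteq> {..<n} \<and> card T = k}"
proof (intro equalityI subsetI)
  fix S assume S: "S \<in> {S. S \<subseteq> {..<Suc n} \<and> card S = Suc k}"
  define T where "T = {j. Suc j \<in> S}"
  have TS: "Suc ` T = S - {0}"
    unfolding T_def by (auto simp: image_iff) (metis not0_implies_Suc)
  have "T \<subseteq> {..<n}" using S unfolding T_def by auto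
  moreover have "card T = card (S - {0})"
    using TS card_image[of Suc T] by simp
  moreover have "finite S" using S finite_subset by auto
  ultimately show "S \<in> (\<lambda>T. Suc ` T) ` {T. T \<subseteq> {..<n} \<and> card T = Suc k}
      \<union> (\<lambda>T. insert 0 (Suc ` T)) ` {T. T \<subseteq> {..<n} \<and> card T = k}"
    using S TS by (cases "0 \<in> S") (auto simp: image_iff intro!: exI[of _ T])
next
  fix S assume "S \<in> (\<lambda>T. Suc ` T) ` {T. T \<subseteq> {..<n} \<and> card T = Suc k}
      \<union> (\<lambda>T. insert 0 (Suc ` T)) ` {T. T \<subseteq> {..<n} \<and> card T = k}"
  then show "S \<in> {S. S \<subseteq> {..<Suc n} \<and> card S = Suc k}"
    by (auto simp: card_image card_insert_if dest: finite_subset[OF _ finite_lessThan])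
qed

lemma esym_0: "esym 0 xs = 1"
proof -
  have "{S. S \<subseteq> {..<length xs} \<and> card S = 0} = {{}}"
    by (auto dest: finite_subset[OF _ finite_lessThan])
  then show ?thesis unfolding esym_def by simp
qed

lemma esym_Suc_Cons: "esym (Suc k) (x # xs) = esym (Suc k) xs + x * esym k xs"
proof -
  let ?F = "\<lambda>m. {T. T \<subseteq> {..<length xs} \<and> card T = m}"
  have fin: "finite (?F m)" for m
    by (rule finite_subset[of _ "Pow {..<length xs}"]) auto
  have inj_Suc: "inj_on (\<lambda>T. Suc ` T) (?F m)" for m
    by (rule inj_onI) (simp add: inj_image_eq_iff)
  have inj_insert: "inj_on (\<lambda>T. insert 0 (Suc ` T)) (?F m)" for m
  proof (rule inj_onI)
    fix A B assume "insert 0 (Suc ` A) = insert 0 (Suc ` B)"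
    then have "Suc ` A = Suc ` B" by (metis Diff_insert_absorb imageE nat.distinct(1))
    then show "A = B" by (simp add: inj_image_eq_iff)
  qed
  have "esym (Suc k) (x # xs) = (\<Sum>S\<in>(\<lambda>T. Suc ` T) ` ?F (Suc k). \<Prod>i\<in>S. (x # xs) ! i)
      + (\<Sum>S\<in>(\<lambda>T. insert 0 (Suc ` T)) ` ?F k. \<Prod>i\<in>S. (x # xs) ! i)"
    unfolding esym_def length_Cons card_subsets_lessThan_Suc
    using fin by (intro sum.union_disjoint) auto
  also have "(\<Sum>S\<in>(\<lambda>T. Suc ` T) ` ?F (Suc k). \<Prod>i\<in>S. (x # xs) ! i) = esym (Suc k) xs"
    unfolding sum.reindex[OF inj_Suc] esym_def
    by (intro sum.cong) (simp_all add: prod.reindex)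
  also have "(\<Sum>S\<in>(\<lambda>T. insert 0 (Suc ` T)) ` ?F k. \<Prod>i\<in>S. (x # xs) ! i) = x * esym k xs"
    unfolding sum.reindex[OF inj_insert] esym_def sum_distrib_left
    by (intro sum.cong) (auto simp: prod.reindex dest: finite_subset[OF _ finite_lessThan])
  finally show ?thesis .
qed

lemma Pt1_Cons: "0 < m \<Longrightarrow> Pt1 m (x # xs) = (esym m xs + x * esym (m - 1) xs) / 2"
  by (cases m) (simp_all add: Pt1_def esym_Suc_Cons)

lemma Pt1_Cons_neg: "0 < m \<Longrightarrow> Pt1 m ((- x) # xs) = (esym m xs - x * esym (m - 1) xs) / 2"
  by (cases m) (simp_all add: Pt1_def esym_Suc_Cons)

lemma Pt1_mult_Cons_neg_diff:
  fixes x :: "'a::field_char_0"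
  assumes "0 < m1" "0 < m2"
  shows "Pt1 m1 ((- x) # xs) * Pt1 m2 ((- x) # xs) - Pt1 m1 (x # xs) * Pt1 m2 (x # xs)
    = - (x / 2) * (esym m1 xs * esym (m2 - 1) xs + esym (m1 - 1) xs * esym m2 xs)"
  unfolding Pt1_Cons[OF assms(1)] Pt1_Cons[OF assms(2)] Pt1_Cons_neg[OF assms(1)] Pt1_Cons_neg[OF assms(2)]
  by (simp add: field_simps)

lemma sum_alternating_telescope:
  fixes g :: "nat \<Rightarrow> 'a::comm_ring_1"
  shows "(\<Sum>k\<in>{1..<Suc n}. (-1) ^ k * (g k + g (k - 1))) = (-1) ^ n * g n - g 0"
  by (induction n) (simp_all add: algebra_simps)

lemma Pt2_Cons_neg_diff:
  fixes x :: "'a::field_char_0"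
  assumes "0 < i"
  shows "Pt2 i j ((- x) # xs) - Pt2 i j (x # xs)
    = Pt1 i ((- x) # xs) * Pt1 j (x # xs) - Pt1 i (x # xs) * Pt1 j ((- x) # xs)"
proof (cases j)
  case 0
  then show ?thesis by (simp add: Pt2_def Pt1_def)
next
  case (Suc j')
  let ?e = "\<lambda>m. esym m xs" and ?X = "x # xs" and ?Y = "(- x) # xs"
  define g where "g k = ?e (i + k) * ?e (j' - k)" for k
  have "0 < j" "0 < i + j" using assms Suc by simp_all
  have middle: "(\<Sum>k\<in>{1..<j}. (-1) ^ k * Pt1 (i + k) ?Y * Pt1 (j - k) ?Y)
      - (\<Sum>k\<in>{1..<j}. (-1) ^ k * Pt1 (i + k) ?X * Pt1 (j - k) ?X)
      = - (x / 2) * ((-1) ^ j' * ?e (i + j') - ?e i * ?e j')"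
  proof -
    have "(-1) ^ k * Pt1 (i + k) ?Y * Pt1 (j - k) ?Y - (-1) ^ k * Pt1 (i + k) ?X * Pt1 (j - k) ?X
        = - (x / 2) * ((-1) ^ k * (g k + g (k - 1)))" if "k \<in> {1..<j}" for k
    proof -
      have "(-1) ^ k * Pt1 (i + k) ?Y * Pt1 (j - k) ?Y - (-1) ^ k * Pt1 (i + k) ?X * Pt1 (j - k) ?X
          = (-1) ^ k * (Pt1 (i + k) ?Y * Pt1 (j - k) ?Y - Pt1 (i + k) ?X * Pt1 (j - k) ?X)"
        by (simp add: algebra_simps)
      also have "\<dots> = (-1) ^ k * (- (x / 2) * (g k + g (k - 1)))"
        using Pt1_mult_Cons_neg_diff[of "i + k" "j - k" x xs] that Suc
        by (simp add: g_def Suc_diff_le add.commute)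
      finally show ?thesis
        by (simp only: mult.left_commute)
    qed
    then have "(\<Sum>k\<in>{1..<j}. (-1) ^ k * Pt1 (i + k) ?Y * Pt1 (j - k) ?Y)
        - (\<Sum>k\<in>{1..<j}. (-1) ^ k * Pt1 (i + k) ?X * Pt1 (j - k) ?X)
        = - (x / 2) * (\<Sum>k\<in>{1..<Suc j'}. (-1) ^ k * (g k + g (k - 1)))"
      unfolding sum_subtractf[symmetric] sum_distrib_left Suc
      by (intro sum.cong) (simp_all flip: Suc)
    then show ?thesis
      unfolding sum_alternating_telescope by (simp add: g_def esym_0)
  qed
  have "Pt2 i j ?Y - Pt2 i j ?X
      = (Pt1 i ?Y * Pt1 j ?Y - Pt1 i ?X * Pt1 j ?X)
        + 2 * ((\<Sum>k\<in>{1..<j}. (-1) ^ k * Pt1 (i + k) ?Y * Pt1 (j - k) ?Y)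
          - (\<Sum>k\<in>{1..<j}. (-1) ^ k * Pt1 (i + k) ?X * Pt1 (j - k) ?X))
        + (-1) ^ j * (Pt1 (i + j) ?Y - Pt1 (i + j) ?X)"
    using Suc by (simp add: Pt2_def algebra_simps)
  also have "\<dots> = (x / 2) * (?e i * ?e j' - ?e (i - 1) * ?e j)"
    unfolding middle Pt1_mult_Cons_neg_diff[OF assms \<open>0 < j\<close>]
      Pt1_Cons[OF \<open>0 < i + j\<close>] Pt1_Cons_neg[OF \<open>0 < i + j\<close>]
    using Suc by (simp add: field_simps)
  also have "\<dots> = Pt1 i ?Y * Pt1 j ?X - Pt1 i ?X * Pt1 j ?Y"
    unfolding Pt1_Cons[OF assms] Pt1_Cons_neg[OF assms] Pt1_Cons[OF \<open>0 < j\<close>] Pt1_Cons_neg[OF \<open>0 < j\<close>]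
    using Suc by (simp add: field_simps)
  finally show ?thesis .
qed

section \<open>The Pfaffian of a partition as a Pfaffian indexed by positions\<close>

definition skew_upper :: "(nat \<Rightarrow> nat \<Rightarrow> 'a::comm_ring_1) \<Rightarrow> nat \<Rightarrow> nat \<Rightarrow> 'a" where
  "skew_upper g i j = (if i < j then g i j else if j < i then - g j i else 0)"

lemma skew_skew_upper: "skew (skew_upper g)"
  unfolding skew_def skew_upper_def by auto

lemma pfaff_cong_sorted:
  "sorted_wrt (<) L \<Longrightarrow> (\<And>x y. x \<in> set L \<Longrightarrow> y \<in> set L \<Longrightarrow> x < y \<Longrightarrow> a x y = b x y)
    \<Longrightarrow> pfaff a L = pfaff b L"
proof (induction a L rule: pfaff.induct)
  case (2 a i "is")
  have "pfaff a (take k is @ drop (Suc k) is) = pfaff b (take k is @ drop (Suc k) is)"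
    if "k < length is" for k
  proof (rule "2.IH")
    have "sorted is" "distinct is" using "2.prems"(1) by (simp_all add: strict_sorted_iff)
    then show "sorted_wrt (<) (take k is @ drop (Suc k) is)"
      using that by (simp add: take_drop_Suc_eq_remove1_nth strict_sorted_iff sorted_remove1)
    fix x y assume "x \<in> set (take k is @ drop (Suc k) is)" "y \<in> set (take k is @ drop (Suc k) is)" "x < y"
    then show "a x y = b x y"
      using "2.prems"(2) set_take_drop_Suc_subset[of k "is"] by auto
  qed (use that in simp)
  then show ?case
    using "2.prems" unfolding pfaff.simps by (intro sum.cong) auto
qed simp

lemma pfaff_skew_upper: "sorted_wrt (<) L \<Longrightarrow> pfaff (skew_upper g) L = pfaff g L"
  by (rule pfaff_cong_sorted) (auto simp: skew_upper_def)

lemma pfaff_upt_nth: "pfaff (\<lambda>i j. a (N ! i) (N ! j)) [0..<length N] = pfaff a N"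
  using pfaff_map[of a "(!) N" "[0..<length N]"] by (simp add: map_nth)

definition Pt_matrix :: "nat list \<Rightarrow> 'a::field_char_0 list \<Rightarrow> nat \<Rightarrow> nat \<Rightarrow> 'a" where
  "Pt_matrix vals ys = skew_upper (\<lambda>i j. Pt2 (vals ! i) (vals ! j) ys)"

lemma skew_Pt_matrix: "skew (Pt_matrix vals ys)"
  unfolding Pt_matrix_def by (rule skew_skew_upper)

lemma Pt_matrix_Cons_neg:
  assumes "0 < vals ! i" "0 < vals ! j"
  shows "Pt_matrix vals ((- x) # xs) i j = Pt_matrix vals (x # xs) i j
    + Pt1 (vals ! i) ((- x) # xs) * Pt1 (vals ! j) (x # xs)
    - Pt1 (vals ! i) (x # xs) * Pt1 (vals ! j) ((- x) # xs)"
  using Pt2_Cons_neg_diff[OF assms(1), of "vals ! j" x xs] Pt2_Cons_neg_diff[OF assms(2), of "vals ! i" x xs]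
  by (auto simp: Pt_matrix_def skew_upper_def algebra_simps)

lemma Pt_matrix_zero_column: "i < l \<Longrightarrow> vals ! l = 0 \<Longrightarrow> Pt_matrix vals ys i l = Pt1 (vals ! i) ys"
  by (simp add: Pt_matrix_def skew_upper_def Pt2_def)

lemma esym_eq_Pt1_Cons_neg_add: "0 < m \<Longrightarrow> esym m xs = Pt1 m ((- x) # xs) + Pt1 m (x # xs)"
  by (simp add: Pt1_Cons Pt1_Cons_neg field_simps)

lemma Ptl_map_nth_eq_pfaff:
  fixes ys :: "'a::field_char_0 list"
  assumes "sorted_wrt (<) N" "set N \<subseteq> {..<length lam}"
  shows "Ptl (map ((!) (lam @ [0])) N) ys
    = pfaff (Pt_matrix (lam @ [0]) ys) (if odd (length N) then N @ [length lam] else N)"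
proof -
  define vals where "vals = lam @ [0]"
  define N' where "N' = (if odd (length N) then N @ [length lam] else N)"
  have padded: "(if odd (length N) then map ((!) vals) N @ [0] else map ((!) vals) N)
      = map ((!) vals) N'"
    by (simp add: N'_def vals_def)
  have "sorted_wrt (<) N'"
    using assms by (auto simp: N'_def sorted_wrt_append)
  have "Ptl (map ((!) vals) N) ys
      = pfaff (\<lambda>i j. Pt2 (map ((!) vals) N' ! i) (map ((!) vals) N' ! j) ys) [0..<length N']"
    unfolding Ptl_def Let_def length_map padded by simp
  also have "\<dots> = pfaff (\<lambda>i j. Pt2 (vals ! (N' ! i)) (vals ! (N' ! j)) ys) [0..<length N']"
    by (intro pfaff_cong) simp
  also have "\<dots> = pfaff (Pt_matrix vals ys) N'"
    using pfaff_upt_nth[of "\<lambda>p q. Pt2 (vals ! p) (vals ! q) ys" N']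
    by (simp add: Pt_matrix_def pfaff_skew_upper[OF \<open>sorted_wrt (<) N'\<close>])
  finally show ?thesis
    unfolding vals_def N'_def .
qed

lemma map_nth_append_upt: "map ((!) (lam @ [0])) [0..<length lam] = lam"
  by (rule nth_equalityI) (simp_all add: nth_append)

lemma remove_part_Suc_eq_map_nth:
  assumes "k < length lam"
  shows "remove_part lam (Suc k) = map ((!) (lam @ [0])) (remove1 k [0..<length lam])"
proof -
  let ?M = "[0..<length lam]" and ?f = "(!) (lam @ [0])"
  have "remove_part lam (Suc k) = take k (map ?f ?M) @ drop (Suc k) (map ?f ?M)"
    by (simp add: remove_part_def map_nth_append_upt)
  also have "\<dots> = map ?f (take k ?M @ drop (Suc k) ?M)"
    by (simp add: take_map drop_map)
  also have "take k ?M @ drop (Suc k) ?M = remove1 k ?M"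
    using assms take_drop_Suc_eq_remove1_nth[of ?M k] by simp
  finally show ?thesis .
qed

lemma Ptl_sign_change_expansion:
  fixes x :: "'a::field_char_0"
  assumes pos: "\<forall>p\<in>set lam. 0 < p"
  shows "(\<Sum>k<length lam. (-1) ^ k * Ptl (remove_part lam (Suc k)) (x # xs) * esym (lam ! k) xs)
    = Ptl lam ((- x) # xs) + (-1) ^ (length lam + 1) * Ptl lam (x # xs)"
proof -
  define l where "l = length lam"
  define vals where "vals = lam @ [0]"
  define M where "M = [0..<l]"
  define pad where "pad N = (if odd (length N) then N @ [l] else N)" for N
  define u where "u p = Pt1 (vals ! p) ((- x) # xs)" for p
  define v where "v p = Pt1 (vals ! p) (x # xs)" for p
  have vals_nth: "vals ! p = lam ! p" "0 < vals ! p" if "p \<in> set M" for p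
    using that pos by (auto simp: vals_def M_def l_def nth_append)
  have Ptl_pfaff: "Ptl (map ((!) vals) N) ys = pfaff (Pt_matrix vals ys) (pad N)"
    if "sorted_wrt (<) N" "set N \<subseteq> set M" for N ys
    using Ptl_map_nth_eq_pfaff[OF that(1), of lam ys] that(2)
    by (simp add: vals_def pad_def M_def l_def atLeast0LessThan)
  have "(\<Sum>k<l. (-1) ^ k * Ptl (remove_part lam (Suc k)) (x # xs) * esym (lam ! k) xs)
      = (\<Sum>k\<in>set M. (-1) ^ index_of M k * (u k + v k) * pfaff (Pt_matrix vals (x # xs)) (pad (remove1 k M)))"
  proof (rule sum.cong)
    fix k assume k: "k \<in> set M"
    have "index_of M k = k"
      using k index_of_nth[of M k] by (simp add: M_def)
    moreover have "remove_part lam (Suc k) = map ((!) vals) (remove1 k M)"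
      using k remove_part_Suc_eq_map_nth[of k lam] by (simp add: M_def l_def vals_def)
    moreover have "esym (lam ! k) xs = u k + v k"
      using vals_nth[OF k] by (simp add: u_def v_def esym_eq_Pt1_Cons_neg_add)
    moreover have "Ptl (map ((!) vals) (remove1 k M)) (x # xs)
        = pfaff (Pt_matrix vals (x # xs)) (pad (remove1 k M))"
      using set_remove1_subset[of k M] by (intro Ptl_pfaff) (simp_all add: M_def strict_sorted_iff sorted_remove1)
    ultimately show "(-1) ^ k * Ptl (remove_part lam (Suc k)) (x # xs) * esym (lam ! k) xs
        = (-1) ^ index_of M k * (u k + v k) * pfaff (Pt_matrix vals (x # xs)) (pad (remove1 k M))"
      by simp
  qed (simp add: M_def atLeast0LessThan)
  moreover have "\<dots> = pfaff (Pt_matrix vals ((- x) # xs)) (pad M)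
      + (-1) ^ (length M + 1) * pfaff (Pt_matrix vals (x # xs)) (pad M)"
  proof -
    have dist: "distinct (M @ [l])" by (simp add: M_def)
    have update: "Pt_matrix vals ((- x) # xs) i j = Pt_matrix vals (x # xs) i j + u i * v j - v i * u j"
      if "i \<in> set M" "j \<in> set M" for i j
      using Pt_matrix_Cons_neg[OF vals_nth(2)[OF that(1)] vals_nth(2)[OF that(2)]] by (simp add: u_def v_def)
    have last_col: "Pt_matrix vals ((- x) # xs) i l = u i" "Pt_matrix vals (x # xs) i l = v i"
      if "i \<in> set M" for i
      using that by (simp_all add: Pt_matrix_zero_column M_def vals_def l_def u_def v_def)
    show ?thesis
      using pfaff_rank_two_update[OF dist skew_Pt_matrix skew_Pt_matrix update last_col, folded pad_def]
      by simp
  qed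
  moreover have "Ptl lam ys = pfaff (Pt_matrix vals ys) (pad M)" for ys :: "'a list"
    using Ptl_pfaff[of M ys] by (simp add: M_def l_def vals_def map_nth_append_upt)
  ultimately show ?thesis
    by (simp add: M_def l_def)
qed

theorem proposition7:
  fixes xs :: "'a::field_char_0 list" and n :: nat and lam :: "nat list"
  assumes "length xs = n" and "in_E n lam" and "length lam \<ge> 1"
  shows "(\<Sum>i=1..length lam. (-1) ^ (i - 1) * Ptl (remove_part lam i) xs
            * esym (lam ! (i - 1)) (tl xs))
         = Ptl lam ((- hd xs) # tl xs) + (-1) ^ (length lam + 1) * Ptl lam xs"
proof -
  have parts: "\<forall>p\<in>set lam. 0 < p \<and> p \<le> n"
    using assms(2) by (simp add: in_E_def)
  then have "0 < n"
    using assms(3) by (cases lam) auto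
  then obtain x t where xs: "xs = x # t"
    using assms(1) by (cases xs) auto
  have "(\<Sum>i=1..length lam. (-1) ^ (i - 1) * Ptl (remove_part lam i) xs * esym (lam ! (i - 1)) (tl xs))
      = (\<Sum>k<length lam. (-1) ^ k * Ptl (remove_part lam (Suc k)) (x # t) * esym (lam ! k) t)"
    by (simp add: sum.atLeast1_atMost_eq xs)
  also have "\<dots> = Ptl lam ((- x) # t) + (-1) ^ (length lam + 1) * Ptl lam (x # t)"
    using parts by (intro Ptl_sign_change_expansion) simp
  finally show ?thesis
    by (simp add: xs)
qed

end
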